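(* Assume $N\ge n$. For every matrix $U\in\mathbb{R}^{n\times N}$ with $UU^T=I_n$, the coefficient matrix $$F=\begin{bmatrix}\mathbb{E}[f(\Delta)] & L\,U\,W_1^{-1/2}\end{bmatrix}\in\mathbb{R}^{n\times(N+1)}$$ yields a PC approximation $\hat f(\Delta)=F\Phi(\Delta)$ with exact first and second moments, i.e. $$\mathbb{E}[\hat f(\Delta)]=\mathbb{E}[f(\Delta)],\qquad \mathbb{E}[\hat f(\Delta)\hat f(\Delta)^T]=F W F^T=\mathbb{E}[f(\Delta)f(\Delta)^T].$$ Conversely, every $F\in\mathbb{R}^{n\times(N+1)}$ satisfying these two moment equalities is of this form for some $U\in\mathbb{R}^{n\times N}$ with $UU^T=I_n$.
   Context: Let $\Delta$ be a random vector taking values in $D\subseteq\mathbb{R}^d$ with probability density $p$, and $\mathbb{E}[g(\Delta)]=\int_D g(\Delta)p(\Delta)\,d\Delta$. Let $f:D\to\mathbb{R}^n$ have square-integrable components. Let $\phi_0\equiv 1,\phi_1,\dots,\phi_N$ be polynomials on $D$, orthogonal with respect to $p$: $\mathbb{E}[\phi_i(\Delta)\phi_j(\Delta)]=0$ for $i\neq j$, with $\mathbb{E}[\phi_i(\Delta)^2]>0$ for all $i$. Set $\Phi(\Delta)=[\phi_0(\Delta),\dots,\phi_N(\Delta)]^T$ (so $\mathbb{E}[\Phi(\Delta)]=[1,0,\dots,0]^T$), $W=\mathbb{E}[\Phi\Phi^T]=\mathrm{diag}(\mathbb{E}[\phi_0^2],\dots,\mathbb{E}[\phi_N^2])$, and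 $W_1=\mathrm{diag}(\mathbb{E}[\phi_1^2],\dots,\mathbb{E}[\phi_N^2])$. A PC approximation of $f$ with coefficient matrix $F\in\mathbb{R}^{n\times(N+1)}$ is $\hat f(\Delta)=F\Phi(\Delta)$. Let $L\in\mathbb{R}^{n\times n}$ be any matrix (e.g. a Cholesky factor) with $LL^T=\mathbb{E}[f f^T]-\mathbb{E}[f]\mathbb{E}[f]^T$ (the covariance of $f(\Delta)$). *)

theory Defs
  imports "HOL-Probability.Probability" "Jordan_Normal_Form.Matrix"
begin

definition poly_fun :: "('a::euclidean_space \<Rightarrow> real) \<Rightarrow> bool" where
  "poly_fun q \<longleftrightarrow> (\<exists>K c. finite K \<and>
      (\<forall>x. q x = (\<Sum>k\<in>K. c k * (\<Prod>b\<in>Basis. (x \<bullet> b) ^ k b))))"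

definition dens_measure :: "'a::euclidean_space set \<Rightarrow> ('a \<Rightarrow> real) \<Rightarrow> 'a measure" where
  "dens_measure D p = density lborel (\<lambda>x. ennreal (indicator D x * p x))"

definition Expect :: "'a::euclidean_space set \<Rightarrow> ('a \<Rightarrow> real) \<Rightarrow> ('a \<Rightarrow> real) \<Rightarrow> real" where
  "Expect D p g = integral\<^sup>L (dens_measure D p) g"

end

theory Submission
  imports Defs
begin

text \<open>Since \<open>\<phi>\<^sub>0 = 1\<close> and the \<open>\<phi>\<^sub>j\<close> are orthogonal, \<open>E[F \<Phi>]\<close> is the first column \<open>m\<close> of \<open>F\<close> and
  \<open>E[F \<Phi> (F \<Phi>)\<^sup>T] = F W F\<^sup>T = m m\<^sup>T + H H\<^sup>T\<close>, where \<open>H\<close> consists of the remaining columns times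
  \<open>W\<^sub>1\<^sup>1\<^sup>/\<^sup>2\<close>.  So the moments of \<open>f\<close> are matched exactly when \<open>m = E[f]\<close> and \<open>H H\<^sup>T = L L\<^sup>T\<close>.
  The solutions of \<open>H H\<^sup>T = L L\<^sup>T\<close> are exactly the matrices \<open>H = L U\<close> with \<open>U U\<^sup>T = I\<close>: the rows of
  \<open>L\<close> and of \<open>H\<close> have the same Gram matrix, so Gram--Schmidt run on both in parallel produces
  orthonormal systems with identical coefficients, and because \<open>N \<ge> n\<close> these extend to an
  isometry \<open>\<real>\<^sup>n \<rightarrow> \<real>\<^sup>N\<close> mapping each row of \<open>L\<close> to the corresponding row of \<open>H\<close>.\<close>

section \<open>Orthonormal systems of coordinate vectors\<close>

text \<open>A vector of \<open>\<real>\<^sup>m\<close> is a function \<open>nat \<Rightarrow> real\<close> of which only the coordinates below \<open>m\<close> matter;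
  a family \<open>q :: nat \<Rightarrow> nat \<Rightarrow> real\<close> consists of the vectors \<open>q 0, q 1, \<dots>\<close>.\<close>

definition dot :: "nat \<Rightarrow> (nat \<Rightarrow> real) \<Rightarrow> (nat \<Rightarrow> real) \<Rightarrow> real" where
  "dot m x y = (\<Sum>c<m. x c * y c)"

lemma dot_commute: "dot m x y = dot m y x"
  unfolding dot_def by (simp add: mult.commute)

lemma dot_sum_right: "dot m x (\<lambda>c. \<Sum>j\<in>A. a j * y j c) = (\<Sum>j\<in>A. a j * dot m x (y j))"
  unfolding dot_def
  by (simp add: sum_distrib_left sum_distrib_right mult.assoc mult.left_commute sum.swap[of _ A])

lemma dot_sum_left: "dot m (\<lambda>c. \<Sum>j\<in>A. a j * y j c) x = (\<Sum>j\<in>A. a j * dot m (y j) x)"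
  by (simp add: dot_commute[of m _ x] dot_sum_right)

lemma dot_diff_right: "dot m x (\<lambda>c. y c - z c) = dot m x y - dot m x z"
  unfolding dot_def by (simp add: right_diff_distrib sum_subtractf)

lemma dot_divide_right: "dot m x (\<lambda>c. y c / a) = dot m x y / a"
  unfolding dot_def by (simp add: sum_divide_distrib)

lemma dot_divide_left: "dot m (\<lambda>c. y c / a) x = dot m y x / a"
  unfolding dot_def by (simp add: sum_divide_distrib)

lemma dot_cong_left: "(\<And>c. c < m \<Longrightarrow> x c = x' c) \<Longrightarrow> dot m x y = dot m x' y"
  unfolding dot_def by (intro sum.cong) auto

lemma dot_self_nonneg: "dot m x x \<ge> 0"
  unfolding dot_def by (intro sum_nonneg) auto

lemma dot_self_eq_0D: "dot m x x = 0 \<Longrightarrow> c < m \<Longrightarrow> x c = 0"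
  unfolding dot_def by (subst (asm) sum_nonneg_eq_0_iff) auto

definition kron_delta :: "nat \<Rightarrow> nat \<Rightarrow> real" where
  "kron_delta i c = (if c = i then 1 else 0)"

lemma dot_kron_delta_left: "i < m \<Longrightarrow> dot m (kron_delta i) y = y i"
  unfolding dot_def kron_delta_def by (simp add: if_distrib[of "\<lambda>a. a * _"] cong: if_cong)

definition orthonormal :: "nat \<Rightarrow> nat \<Rightarrow> (nat \<Rightarrow> nat \<Rightarrow> real) \<Rightarrow> bool" where
  "orthonormal m k q \<longleftrightarrow> (\<forall>j<k. \<forall>j'<k. dot m (q j) (q j') = (if j = j' then 1 else 0))"

lemma orthonormal_adjoin:
  assumes "orthonormal m k q" "dot m v v = 1" "\<forall>j<k. dot m v (q j) = 0"
  shows "orthonormal m (Suc k) (q(k := v))"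
  using assms unfolding orthonormal_def by (auto simp: less_Suc_eq dot_commute)

lemma dot_orthonormal_combination:
  assumes "orthonormal m k q" "j < k"
  shows "dot m (q j) (\<lambda>c. \<Sum>j'<k. a j' * q j' c) = a j"
proof -
  have "dot m (q j) (\<lambda>c. \<Sum>j'<k. a j' * q j' c) = (\<Sum>j'<k. a j' * (if j = j' then 1 else 0))"
    unfolding dot_sum_right using assms unfolding orthonormal_def by (intro sum.cong) auto
  also have "\<dots> = a j" using assms(2) by (simp add: if_distrib cong: if_cong)
  finally show ?thesis .
qed

lemma dot_combination_left:
  "(\<And>c. c < m \<Longrightarrow> x c = (\<Sum>j<k. a j * q j c)) \<Longrightarrow> dot m x z = (\<Sum>j<k. a j * dot m (q j) z)"
  by (subst dot_cong_left[where x'="\<lambda>c. \<Sum>j<k. a j * q j c"]) (auto simp: dot_sum_left)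

definition residual :: "nat \<Rightarrow> nat \<Rightarrow> (nat \<Rightarrow> nat \<Rightarrow> real) \<Rightarrow> (nat \<Rightarrow> real) \<Rightarrow> nat \<Rightarrow> real" where
  "residual m k q x = (\<lambda>c. x c - (\<Sum>j<k. dot m x (q j) * q j c))"

lemma dot_residual_right:
  "dot m z (residual m k q x) = dot m z x - (\<Sum>j<k. dot m x (q j) * dot m z (q j))"
  unfolding residual_def dot_diff_right dot_sum_right by simp

lemma dot_residual_orthonormal:
  assumes "orthonormal m k q" "j < k"
  shows "dot m (residual m k q x) (q j) = 0"
  using dot_orthonormal_combination[OF assms, of "\<lambda>j. dot m x (q j)"]
  by (simp add: dot_commute[of m _ "q j"] residual_def dot_diff_right)

lemma dot_residual_self:
  assumes "orthonormal m k q"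
  shows "dot m x (residual m k q x) = dot m (residual m k q x) (residual m k q x)"
  using dot_residual_orthonormal[OF assms]
  by (simp add: dot_residual_right[of _ "residual m k q x"] dot_commute)

lemma residual_norm:
  assumes "orthonormal m k q"
  shows "dot m (residual m k q x) (residual m k q x) = dot m x x - (\<Sum>j<k. (dot m x (q j))\<^sup>2)"
  using dot_residual_self[OF assms, of x] by (simp add: dot_residual_right power2_eq_square)

lemma orthonormal_sum_sq_coords:
  assumes "orthonormal m k q"
  shows "(\<Sum>i<m. \<Sum>j<k. (q j i)\<^sup>2) = real k"
proof -
  have "(\<Sum>i<m. \<Sum>j<k. (q j i)\<^sup>2) = (\<Sum>j<k. dot m (q j) (q j))"
    unfolding dot_def by (simp add: sum.swap[of _ "{..<m}"] power2_eq_square)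
  then show ?thesis using assms unfolding orthonormal_def by simp
qed

lemma residual_kron_delta_norm:
  assumes "orthonormal m k q" "i < m"
  shows "dot m (residual m k q (kron_delta i)) (residual m k q (kron_delta i)) = 1 - (\<Sum>j<k. (q j i)\<^sup>2)"
  using assms by (simp add: residual_norm dot_kron_delta_left kron_delta_def)

definition gs_step :: "nat \<Rightarrow> nat \<Rightarrow> (nat \<Rightarrow> nat \<Rightarrow> real) \<Rightarrow> (nat \<Rightarrow> real) \<Rightarrow> nat \<Rightarrow> nat \<Rightarrow> real" where
  "gs_step m k q x = q(k := (\<lambda>c. residual m k q x c / sqrt (dot m (residual m k q x) (residual m k q x))))"

lemma gs_step_less [simp]: "j < k \<Longrightarrow> gs_step m k q x j = q j"
  unfolding gs_step_def by simp

definition in_orth_span :: "nat \<Rightarrow> nat \<Rightarrow> (nat \<Rightarrow> nat \<Rightarrow> real) \<Rightarrow> (nat \<Rightarrow> real) \<Rightarrow> bool" where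
  "in_orth_span m k q x \<longleftrightarrow> (\<forall>c<m. x c = (\<Sum>j<k. dot m x (q j) * q j c))"

lemma in_orth_span_if_residual_zero:
  assumes "dot m (residual m k q x) (residual m k q x) = 0"
  shows "in_orth_span m k q x"
  using dot_self_eq_0D[OF assms] unfolding in_orth_span_def residual_def by simp

lemma
  assumes q: "orthonormal m k q" and pos: "dot m (residual m k q x) (residual m k q x) > 0"
  shows orthonormal_gs_step: "orthonormal m (Suc k) (gs_step m k q x)"
    and in_orth_span_gs_step: "in_orth_span m (Suc k) (gs_step m k q x) x"
    and in_orth_span_gs_step_mono:
      "in_orth_span m k q z \<Longrightarrow> in_orth_span m (Suc k) (gs_step m k q x) z"
proof -
  define r where "r = residual m k q x"
  define \<nu> where "\<nu> = sqrt (dot m r r)"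
  have rr: "dot m r r > 0" using pos r_def by simp
  then have nu: "\<nu> > 0" "\<nu> * \<nu> = dot m r r" unfolding \<nu>_def by auto
  have new: "gs_step m k q x k = (\<lambda>c. r c / \<nu>)" unfolding gs_step_def r_def \<nu>_def by simp
  have sum_old: "(\<Sum>j<k. g (gs_step m k q x j)) = (\<Sum>j<k. g (q j))" for g :: "_ \<Rightarrow> real"
    by (intro sum.cong) auto
  show "orthonormal m (Suc k) (gs_step m k q x)"
    unfolding gs_step_def r_def[symmetric] \<nu>_def[symmetric]
  proof (rule orthonormal_adjoin[OF q])
    show "dot m (\<lambda>c. r c / \<nu>) (\<lambda>c. r c / \<nu>) = 1"
      unfolding dot_divide_left dot_divide_right using nu rr by (simp add: field_simps)
    show "\<forall>j<k. dot m (\<lambda>c. r c / \<nu>) (q j) = 0"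
      unfolding dot_divide_left r_def using dot_residual_orthonormal[OF q] by simp
  qed
  have "dot m x r = \<nu> * \<nu>" unfolding r_def dot_residual_self[OF q] using nu r_def by simp
  then have "dot m x (gs_step m k q x k) * gs_step m k q x k c = r c" for c
    unfolding new dot_divide_right using nu rr by (simp add: field_simps)
  then show "in_orth_span m (Suc k) (gs_step m k q x) x"
    using sum_old[of "\<lambda>v. dot m x v * v _"] unfolding in_orth_span_def r_def residual_def by simp
  assume z: "in_orth_span m k q z"
  have "dot m z r = (\<Sum>j<k. dot m z (q j) * dot m (q j) r)"
    by (rule dot_combination_left) (use z in \<open>auto simp: in_orth_span_def\<close>)
  also have "\<dots> = 0" using dot_residual_orthonormal[OF q] by (simp add: dot_commute r_def)
  finally have "dot m z (gs_step m k q x k) = 0" unfolding new dot_divide_right by simp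
  then show "in_orth_span m (Suc k) (gs_step m k q x) z"
    using z sum_old[of "\<lambda>v. dot m z v * v _"] by (simp add: in_orth_span_def)
qed

text \<open>Fewer than \<open>m\<close> orthonormal vectors cannot have squared coordinates summing to \<open>1\<close> in every
  coordinate, so some unit vector has a nonzero residual.\<close>
lemma orthonormal_extend_one:
  assumes q: "orthonormal m k q" and "k < m"
  shows "\<exists>x. orthonormal m (Suc k) (gs_step m k q x)"
proof -
  have "\<exists>i<m. (\<Sum>j<k. (q j i)\<^sup>2) < 1"
  proof (rule ccontr)
    assume "\<not> ?thesis"
    then have "\<forall>i<m. 1 \<le> (\<Sum>j<k. (q j i)\<^sup>2)" by (meson not_le)
    then have "(\<Sum>i<m. (1::real)) \<le> (\<Sum>i<m. \<Sum>j<k. (q j i)\<^sup>2)"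
      by (intro sum_mono) auto
    then show False using orthonormal_sum_sq_coords[OF q] \<open>k < m\<close> by simp
  qed
  then obtain i where "i < m" "(\<Sum>j<k. (q j i)\<^sup>2) < 1" by auto
  then have "dot m (residual m k q (kron_delta i)) (residual m k q (kron_delta i)) > 0"
    by (simp add: residual_kron_delta_norm[OF q])
  then show ?thesis using orthonormal_gs_step[OF q] by blast
qed

lemma orthonormal_extend:
  assumes "orthonormal m k q" "k \<le> l" "l \<le> m"
  shows "\<exists>q'. orthonormal m l q' \<and> (\<forall>j<k. q' j = q j)"
  using assms(2,3)
proof (induction l)
  case 0
  then show ?case using assms(1) by auto
next
  case (Suc l)
  show ?case
  proof (cases "k = Suc l")
    case True
    then show ?thesis using assms(1) by auto
  next
    case False
    then obtain q' where q': "orthonormal m l q'" "\<forall>j<k. q' j = q j" using Suc by auto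
    obtain x where "orthonormal m (Suc l) (gs_step m l q' x)"
      using orthonormal_extend_one[OF q'(1)] Suc by auto
    moreover have "\<forall>j<k. gs_step m l q' x j = q j" using q'(2) False Suc by auto
    ultimately show ?thesis by blast
  qed
qed

text \<open>Orthonormal rows of a square matrix are also orthonormal columns: the residual of every
  unit vector has norm \<open>1 - (\<Sum>j<n. (q j i)\<^sup>2) \<ge> 0\<close>, and these sum to \<open>0\<close>.\<close>
lemma orthonormal_square_columns:
  assumes q: "orthonormal n n q" and "i < n" "i' < n"
  shows "(\<Sum>j<n. q j i * q j i') = (if i = i' then 1 else 0)"
proof -
  have le: "(\<Sum>j<n. (q j i)\<^sup>2) \<le> 1" if "i < n" for i
    using residual_kron_delta_norm[OF q that] dot_self_nonneg[of n "residual n n q (kron_delta i)"]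
    by linarith
  have "(\<Sum>i<n. 1 - (\<Sum>j<n. (q j i)\<^sup>2)) = 0"
    using orthonormal_sum_sq_coords[OF q] by (simp add: sum_subtractf)
  then have "\<forall>i<n. 1 - (\<Sum>j<n. (q j i)\<^sup>2) = 0"
    using le by (subst (asm) sum_nonneg_eq_0_iff) auto
  then have "dot n (residual n n q (kron_delta i)) (residual n n q (kron_delta i)) = 0"
    using residual_kron_delta_norm[OF q \<open>i < n\<close>] \<open>i < n\<close> by simp
  then have "residual n n q (kron_delta i) i' = 0" using dot_self_eq_0D \<open>i' < n\<close> by blast
  then show ?thesis using \<open>i < n\<close> unfolding residual_def
    by (auto simp: dot_kron_delta_left kron_delta_def)
qed

lemma dot_residual_transfer:
  assumes "\<forall>j<k. dot m x (q j) = dot p y (s j)" "\<forall>j<k. dot m x' (q j) = dot p y' (s j)"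
    and "dot m x' x = dot p y' y"
  shows "dot m x' (residual m k q x) = dot p y' (residual p k s y)"
  using assms by (simp add: dot_residual_right)

text \<open>The last conjunct
  says that \<open>q j\<close> and \<open>s j\<close> are the same linear combination of the \<open>a l\<close> and of the \<open>b l\<close>.\<close>
lemma simultaneous_gram_schmidt:
  assumes "\<forall>i<r. \<forall>j<r. dot m (a i) (a j) = dot p (b i) (b j)"
  shows "\<exists>k q s. k \<le> r \<and> orthonormal m k q \<and> orthonormal p k s \<and>
     (\<forall>i<r. in_orth_span m k q (a i)) \<and> (\<forall>i<r. in_orth_span p k s (b i)) \<and>
     (\<forall>x y. (\<forall>l<r. dot m x (a l) = dot p y (b l)) \<longrightarrow> (\<forall>j<k. dot m x (q j) = dot p y (s j)))"
  using assms
proof (induction r)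
  case 0
  show ?case by (intro exI[of _ 0]) (auto simp: orthonormal_def)
next
  case (Suc r)
  then obtain k q s where k: "k \<le> r" and q: "orthonormal m k q" and s: "orthonormal p k s"
    and span_a: "\<forall>i<r. in_orth_span m k q (a i)" and span_b: "\<forall>i<r. in_orth_span p k s (b i)"
    and transfer: "\<forall>x y. (\<forall>l<r. dot m x (a l) = dot p y (b l)) \<longrightarrow> (\<forall>j<k. dot m x (q j) = dot p y (s j))"
    by (metis less_SucI)
  let ?ra = "residual m k q (a r)" and ?rb = "residual p k s (b r)"
  have coeffs: "\<forall>j<k. dot m (a r) (q j) = dot p (b r) (s j)"
    using transfer Suc.prems by simp
  have residual_transfer: "dot m x ?ra = dot p y ?rb"
    if "\<forall>l<Suc r. dot m x (a l) = dot p y (b l)" for x y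
    using that transfer coeffs by (intro dot_residual_transfer) auto
  have "(\<Sum>j<k. (dot m (a r) (q j))\<^sup>2) = (\<Sum>j<k. (dot p (b r) (s j))\<^sup>2)"
    using coeffs by (intro sum.cong) auto
  then have norms: "dot m ?ra ?ra = dot p ?rb ?rb"
    using Suc.prems by (simp add: residual_norm[OF q] residual_norm[OF s])
  show ?case
  proof (cases "dot m ?ra ?ra = 0")
    case True
    then have "in_orth_span m k q (a r)" "in_orth_span p k s (b r)"
      using norms by (auto intro: in_orth_span_if_residual_zero)
    then have "\<forall>i<Suc r. in_orth_span m k q (a i)" "\<forall>i<Suc r. in_orth_span p k s (b i)"
      using span_a span_b by (auto simp: less_Suc_eq)
    moreover have "\<forall>x y. (\<forall>l<Suc r. dot m x (a l) = dot p y (b l)) \<longrightarrow>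
                 (\<forall>j<k. dot m x (q j) = dot p y (s j))"
      using transfer by simp
    ultimately show ?thesis using k q s le_SucI by blast
  next
    case False
    then have pa: "dot m ?ra ?ra > 0" and pb: "dot p ?rb ?rb > 0"
      using dot_self_nonneg[of m ?ra] norms by linarith+
    let ?q = "gs_step m k q (a r)" and ?s = "gs_step p k s (b r)"
    have "\<forall>x y. (\<forall>l<Suc r. dot m x (a l) = dot p y (b l)) \<longrightarrow>
                 (\<forall>j<Suc k. dot m x (?q j) = dot p y (?s j))"
    proof (intro allI impI)
      fix x y j assume xy: "\<forall>l<Suc r. dot m x (a l) = dot p y (b l)" and "j < Suc k"
      then show "dot m x (?q j) = dot p y (?s j)"
        using transfer residual_transfer[OF xy] norms
        by (cases "j = k") (auto simp: gs_step_def dot_divide_right)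
    qed
    moreover have "\<forall>i<Suc r. in_orth_span m (Suc k) ?q (a i)"
      using span_a in_orth_span_gs_step[OF q pa] in_orth_span_gs_step_mono[OF q pa]
      by (auto simp: less_Suc_eq)
    moreover have "\<forall>i<Suc r. in_orth_span p (Suc k) ?s (b i)"
      using span_b in_orth_span_gs_step[OF s pb] in_orth_span_gs_step_mono[OF s pb]
      by (auto simp: less_Suc_eq)
    ultimately show ?thesis
      using k orthonormal_gs_step[OF q pa] orthonormal_gs_step[OF s pb] Suc_le_mono by blast
  qed
qed

text \<open>The vectors \<open>u k\<close> are the images of the unit vectors under the isometry
  \<open>x \<mapsto> \<Sum>j<n. dot n x (Q j) * S j\<close> of \<open>\<real>\<^sup>n\<close> into \<open>\<real>\<^sup>N\<close>, where the parallel Gram--Schmidt bases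
  \<open>q\<close>, \<open>s\<close> of the spans of the \<open>l i\<close> and the \<open>h i\<close> are completed to \<open>n\<close> orthonormal vectors \<open>Q\<close>, \<open>S\<close>.\<close>
lemma gram_eq_imp_isometric_image:
  assumes "n \<le> N" and gram: "\<forall>i<n. \<forall>j<n. dot n (l i) (l j) = dot N (h i) (h j)"
  shows "\<exists>u. orthonormal N n u \<and> (\<forall>i<n. \<forall>c<N. h i c = (\<Sum>k<n. l i k * u k c))"
proof -
  obtain k q s where k: "k \<le> n" and q: "orthonormal n k q" and s: "orthonormal N k s"
    and span_l: "\<forall>i<n. in_orth_span n k q (l i)" and span_h: "\<forall>i<n. in_orth_span N k s (h i)"
    and transfer: "\<forall>x y. (\<forall>i<n. dot n x (l i) = dot N y (h i)) \<longrightarrow> (\<forall>j<k. dot n x (q j) = dot N y (s j))"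
    using simultaneous_gram_schmidt[OF gram] by blast
  obtain Q where Q: "orthonormal n n Q" and Qq: "\<forall>j<k. Q j = q j"
    using orthonormal_extend[OF q k] by blast
  obtain S where S: "orthonormal N n S" and Ss: "\<forall>j<k. S j = s j"
    using orthonormal_extend[OF s k \<open>n \<le> N\<close>] by blast
  define T where "T i j = (if j < k then dot n (l i) (q j) else 0)" for i j
  have l_expansion: "l i c = (\<Sum>j<n. T i j * Q j c)" if "i < n" "c < n" for i c
  proof -
    have "(\<Sum>j<n. T i j * Q j c) = (\<Sum>j<k. dot n (l i) (q j) * q j c)"
      by (rule sum.mono_neutral_cong_right) (use k Qq in \<open>auto simp: T_def\<close>)
    then show ?thesis using span_l that by (simp add: in_orth_span_def)
  qed
  have h_expansion: "h i c = (\<Sum>j<n. T i j * S j c)" if "i < n" "c < N" for i c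
  proof -
    have "\<forall>j<k. dot n (l i) (q j) = dot N (h i) (s j)" using transfer gram \<open>i < n\<close> by blast
    then have "(\<Sum>j<n. T i j * S j c) = (\<Sum>j<k. dot N (h i) (s j) * s j c)"
      by (intro sum.mono_neutral_cong_right) (use k Ss in \<open>auto simp: T_def\<close>)
    then show ?thesis using span_h that by (simp add: in_orth_span_def)
  qed
  have dot_l_Q: "dot n (l i) (Q j) = T i j" if "i < n" "j < n" for i j
  proof -
    have "dot n (l i) (Q j) = dot n (\<lambda>c. \<Sum>j'<n. T i j' * Q j' c) (Q j)"
      by (rule dot_cong_left) (simp add: l_expansion \<open>i < n\<close>)
    also have "\<dots> = dot n (Q j) (\<lambda>c. \<Sum>j'<n. T i j' * Q j' c)" by (rule dot_commute)
    also have "\<dots> = T i j" by (rule dot_orthonormal_combination[OF Q \<open>j < n\<close>])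
    finally show ?thesis .
  qed
  define u where "u k' = (\<lambda>c. \<Sum>j<n. Q j k' * S j c)" for k'
  show ?thesis
  proof (intro exI[of _ u] conjI allI impI)
    show "orthonormal N n u"
      unfolding orthonormal_def
    proof (intro allI impI)
      fix a b assume "a < n" "b < n"
      have "dot N (u a) (u b) = (\<Sum>j<n. Q j a * dot N (S j) (u b))"
        unfolding u_def[of a] dot_sum_left ..
      also have "\<dots> = (\<Sum>j<n. Q j a * Q j b)"
        by (intro sum.cong refl) (simp add: u_def dot_orthonormal_combination[OF S])
      also have "\<dots> = (if a = b then 1 else 0)" by (rule orthonormal_square_columns[OF Q \<open>a < n\<close> \<open>b < n\<close>])
      finally show "dot N (u a) (u b) = (if a = b then 1 else 0)" .
    qed
  next
    fix i c assume "i < n" "c < N"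
    have "(\<Sum>k'<n. l i k' * u k' c) = (\<Sum>k'<n. \<Sum>j<n. l i k' * Q j k' * S j c)"
      unfolding u_def by (simp add: sum_distrib_left mult.assoc)
    also have "\<dots> = (\<Sum>j<n. \<Sum>k'<n. l i k' * Q j k' * S j c)" by (rule sum.swap)
    also have "\<dots> = (\<Sum>j<n. dot n (l i) (Q j) * S j c)" by (simp add: dot_def sum_distrib_right)
    also have "\<dots> = (\<Sum>j<n. T i j * S j c)" using dot_l_Q[OF \<open>i < n\<close>] by simp
    finally show "h i c = (\<Sum>k'<n. l i k' * u k' c)" using h_expansion[OF \<open>i < n\<close> \<open>c < N\<close>] by simp
  qed
qed

section \<open>Factorizations of a Gram matrix\<close>

lemma index_mult_mat_sum:
  assumes "A \<in> carrier_mat r k" "B \<in> carrier_mat k c" "i < r" "j < c"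
  shows "(A * B) $$ (i, j) = (\<Sum>l<k. A $$ (i, l) * B $$ (l, j))"
  using assms by (auto simp: scalar_prod_def atLeast0LessThan intro!: sum.cong)

lemma index_mult_transpose_dot:
  fixes A B :: "real mat"
  assumes "A \<in> carrier_mat r k" "B \<in> carrier_mat r' k" "i < r" "j < r'"
  shows "(A * B\<^sup>T) $$ (i, j) = dot k (\<lambda>l. A $$ (i, l)) (\<lambda>l. B $$ (j, l))"
  using assms by (subst index_mult_mat_sum[of _ r k _ r']) (auto simp: dot_def)

lemma mult_orthonormal_rows_gram:
  fixes L U :: "'a::comm_semiring_1 mat"
  assumes "L \<in> carrier_mat n n" "U \<in> carrier_mat n N" "U * U\<^sup>T = 1\<^sub>m n"
  shows "(L * U) * (L * U)\<^sup>T = L * L\<^sup>T"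
proof -
  have "(L * U) * (L * U)\<^sup>T = L * (U * (U\<^sup>T * L\<^sup>T))"
    using assms(1,2) by (simp add: transpose_mult[of L n n U N] assoc_mult_mat[of _ n n _ N _ n])
  also have "U * (U\<^sup>T * L\<^sup>T) = (U * U\<^sup>T) * L\<^sup>T"
    using assms(1,2) by (simp add: assoc_mult_mat[of _ n N _ n _ n])
  finally show ?thesis using assms by simp
qed

lemma gram_eq_imp_orthonormal_factor:
  fixes H L :: "real mat"
  assumes H: "H \<in> carrier_mat n N" and L: "L \<in> carrier_mat n n" and "n \<le> N"
    and gram: "H * H\<^sup>T = L * L\<^sup>T"
  shows "\<exists>U \<in> carrier_mat n N. U * U\<^sup>T = 1\<^sub>m n \<and> H = L * U"
proof -
  have "\<forall>i<n. \<forall>j<n. dot n (\<lambda>k. L $$ (i, k)) (\<lambda>k. L $$ (j, k)) = dot N (\<lambda>c. H $$ (i, c)) (\<lambda>c. H $$ (j, c))"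
    using gram index_mult_transpose_dot[OF H H] index_mult_transpose_dot[OF L L] by metis
  then obtain u where u: "orthonormal N n u"
    and factor: "\<forall>i<n. \<forall>c<N. H $$ (i, c) = (\<Sum>k<n. L $$ (i, k) * u k c)"
    using gram_eq_imp_isometric_image[OF \<open>n \<le> N\<close>, of "\<lambda>i k. L $$ (i, k)" "\<lambda>i c. H $$ (i, c)"]
    by blast
  define U where "U = mat n N (\<lambda>(k, c). u k c)"
  have U: "U \<in> carrier_mat n N" unfolding U_def by simp
  show ?thesis
  proof (intro bexI[OF _ U] conjI)
    show "U * U\<^sup>T = 1\<^sub>m n"
    proof (rule eq_matI)
      fix i j assume "i < dim_row (1\<^sub>m n :: real mat)" "j < dim_col (1\<^sub>m n :: real mat)"
      then have "i < n" "j < n" by auto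
      have "dot N (\<lambda>c. U $$ (i, c)) (\<lambda>c. U $$ (j, c)) = dot N (u i) (u j)"
        using \<open>i < n\<close> \<open>j < n\<close> by (auto simp: dot_def U_def intro!: sum.cong)
      with u \<open>i < n\<close> \<open>j < n\<close> show "(U * U\<^sup>T) $$ (i, j) = 1\<^sub>m n $$ (i, j)"
        by (subst index_mult_transpose_dot[OF U U]) (auto simp: orthonormal_def)
    qed (use U in auto)
    show "H = L * U"
    proof (rule eq_matI)
      fix i j assume "i < dim_row (L * U)" "j < dim_col (L * U)"
      with L U factor show "H $$ (i, j) = (L * U) $$ (i, j)"
        by (subst index_mult_mat_sum[OF L U]) (auto simp: U_def)
    qed (use H L U in auto)
  qed
qed

section \<open>Coefficient matrices with prescribed moments\<close>

lemma quadratic_form_mat_diag: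
  fixes F :: "'a::comm_semiring_0 mat"
  assumes F: "F \<in> carrier_mat r k"
  shows "F * mat_diag k w * F\<^sup>T = mat r r (\<lambda>(i, j). \<Sum>l<k. F $$ (i, l) * F $$ (j, l) * w l)"
proof (rule eq_matI)
  fix i j assume "i < dim_row (mat r r (\<lambda>(i, j). \<Sum>l<k. F $$ (i, l) * F $$ (j, l) * w l))"
    "j < dim_col (mat r r (\<lambda>(i, j). \<Sum>l<k. F $$ (i, l) * F $$ (j, l) * w l))"
  with F show "(F * mat_diag k w * F\<^sup>T) $$ (i, j) = mat r r (\<lambda>(i, j). \<Sum>l<k. F $$ (i, l) * F $$ (j, l) * w l) $$ (i, j)"
    by (subst index_mult_mat_sum[of _ r k _ r]) (auto simp: mat_diag_mult_right[OF F] mult_ac)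
qed (use F in auto)

text \<open>The columns \<open>1, \<dots>, N\<close> of \<open>F\<close> times \<open>W\<^sub>1\<^sup>1\<^sup>/\<^sup>2\<close>, where \<open>W = diag (w 0, \<dots>, w N)\<close>
  and \<open>W\<^sub>1 = diag (w 1, \<dots>, w N)\<close>.\<close>
definition scaled_tail :: "nat \<Rightarrow> nat \<Rightarrow> (nat \<Rightarrow> real) \<Rightarrow> real mat \<Rightarrow> real mat" where
  "scaled_tail n N w F = mat n N (\<lambda>(i, c). F $$ (i, Suc c) * sqrt (w (Suc c)))"

lemma quadratic_form_mat_diag_split:
  assumes F: "F \<in> carrier_mat n (N + 1)" and w: "\<forall>c<N. w (Suc c) \<ge> 0"
  shows "F * mat_diag (N + 1) w * F\<^sup>T =
    mat n n (\<lambda>(i, j). F $$ (i, 0) * F $$ (j, 0) * w 0) + scaled_tail n N w F * (scaled_tail n N w F)\<^sup>T"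
    (is "_ = ?M + ?T * ?T\<^sup>T")
proof -
  have T: "?T \<in> carrier_mat n N" by (simp add: scaled_tail_def)
  have tail: "(?T * ?T\<^sup>T) $$ (i, j) = (\<Sum>c<N. F $$ (i, Suc c) * F $$ (j, Suc c) * w (Suc c))"
    if "i < n" "j < n" for i j
  proof -
    have "(?T * ?T\<^sup>T) $$ (i, j) =
        (\<Sum>c<N. F $$ (i, Suc c) * sqrt (w (Suc c)) * (F $$ (j, Suc c) * sqrt (w (Suc c))))"
      using that by (subst index_mult_transpose_dot[OF T T]) (auto simp: dot_def scaled_tail_def)
    also have "\<dots> = (\<Sum>c<N. F $$ (i, Suc c) * F $$ (j, Suc c) * w (Suc c))"
      using w by (intro sum.cong) (auto simp: ac_simps)
    finally show ?thesis .
  qed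
  show ?thesis
    unfolding quadratic_form_mat_diag[OF F] using T tail
    by (intro eq_matI) (auto simp: sum.lessThan_Suc_shift simp del: sum.lessThan_Suc index_mult_mat(1))
qed

definition pc_coeff_mat :: "nat \<Rightarrow> nat \<Rightarrow> (nat \<Rightarrow> real) \<Rightarrow> real vec \<Rightarrow> real mat \<Rightarrow> real mat \<Rightarrow> real mat" where
  "pc_coeff_mat n N w m L U = mat n (N + 1) (\<lambda>(i, j). if j = 0 then m $ i
     else (L * U * mat_diag N (\<lambda>c. 1 / sqrt (w (Suc c)))) $$ (i, j - 1))"

lemma eq_pc_coeff_mat_iff:
  fixes m :: "real vec"
  assumes F: "F \<in> carrier_mat n (N + 1)" and L: "L \<in> carrier_mat n n" and U: "U \<in> carrier_mat n N"
    and w: "\<forall>c<N. w (Suc c) > 0"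
  shows "F = pc_coeff_mat n N w m L U \<longleftrightarrow> (\<forall>i<n. F $$ (i, 0) = m $ i) \<and> scaled_tail n N w F = L * U"
proof -
  define A where "A = L * U"
  have A: "A \<in> carrier_mat n N" using L U by (simp add: A_def)
  have "pc_coeff_mat n N w m L U =
      mat n (N + 1) (\<lambda>(i, j). if j = 0 then m $ i else A $$ (i, j - 1) / sqrt (w j))"
    using A unfolding pc_coeff_mat_def A_def[symmetric] mat_diag_mult_right[OF A]
    by (intro eq_matI) auto
  then have "F = pc_coeff_mat n N w m L U \<longleftrightarrow>
      (\<forall>i<n. F $$ (i, 0) = m $ i \<and> (\<forall>c<N. F $$ (i, Suc c) = A $$ (i, c) / sqrt (w (Suc c))))"
    using F unfolding mat_eq_iff[of F] by (auto simp: All_less_Suc2)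
  also have "\<dots> \<longleftrightarrow> (\<forall>i<n. F $$ (i, 0) = m $ i) \<and>
      (\<forall>i<n. \<forall>c<N. F $$ (i, Suc c) * sqrt (w (Suc c)) = A $$ (i, c))"
    using w by (auto simp: eq_divide_eq)
  also have "\<dots> \<longleftrightarrow> (\<forall>i<n. F $$ (i, 0) = m $ i) \<and> scaled_tail n N w F = A"
    using A unfolding mat_eq_iff[of "scaled_tail n N w F"] by (auto simp: scaled_tail_def)
  finally show ?thesis unfolding A_def .
qed

theorem pc_coeff_mat_moments_iff:
  fixes m :: "real vec"
  assumes F: "F \<in> carrier_mat n (N + 1)" and L: "L \<in> carrier_mat n n" and "n \<le> N"
    and w0: "w 0 = 1" and w: "\<forall>c<N. w (Suc c) > 0"
  shows "(\<forall>i<n. F $$ (i, 0) = m $ i) \<and>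
      F * mat_diag (N + 1) w * F\<^sup>T = L * L\<^sup>T + mat n n (\<lambda>(i, j). m $ i * m $ j)
    \<longleftrightarrow> (\<exists>U \<in> carrier_mat n N. U * U\<^sup>T = 1\<^sub>m n \<and> F = pc_coeff_mat n N w m L U)"
    (is "?moments \<longleftrightarrow> ?factored")
proof -
  let ?T = "scaled_tail n N w F" and ?M = "mat n n (\<lambda>(i, j). m $ i * m $ j)"
  have T: "?T \<in> carrier_mat n N" by (simp add: scaled_tail_def)
  have split: "F * mat_diag (N + 1) w * F\<^sup>T = ?M + ?T * ?T\<^sup>T" if "\<forall>i<n. F $$ (i, 0) = m $ i"
  proof -
    have "mat n n (\<lambda>(i, j). F $$ (i, 0) * F $$ (j, 0) * w 0) = ?M"
      using that w0 by (intro eq_matI) auto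
    then show ?thesis using quadratic_form_mat_diag_split[OF F] w by (simp add: less_imp_le)
  qed
  show ?thesis
  proof
    assume ?moments
    then have "?T * ?T\<^sup>T = L * L\<^sup>T"
      using split T L by (auto simp: mat_eq_iff)
    then obtain U where "U \<in> carrier_mat n N" "U * U\<^sup>T = 1\<^sub>m n" "?T = L * U"
      using gram_eq_imp_orthonormal_factor[OF T L \<open>n \<le> N\<close>] by blast
    with \<open>?moments\<close> show ?factored using eq_pc_coeff_mat_iff[OF F L _ w] by blast
  next
    assume ?factored
    then obtain U where U: "U \<in> carrier_mat n N" "U * U\<^sup>T = 1\<^sub>m n"
      and col0: "\<forall>i<n. F $$ (i, 0) = m $ i" and tail: "?T = L * U"
      using eq_pc_coeff_mat_iff[OF F L _ w] by blast
    have "?T * ?T\<^sup>T = L * L\<^sup>T" using mult_orthonormal_rows_gram[OF L U] tail by simp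
    then show ?moments using split[OF col0] col0 L by (simp add: comm_add_mat[of _ n n])
  qed
qed

section \<open>Moments of orthogonal expansions\<close>

lemma poly_fun_borel_measurable:
  assumes "poly_fun (q :: 'a::euclidean_space \<Rightarrow> real)"
  shows "q \<in> borel_measurable borel"
proof -
  obtain K c where "finite K" and q: "\<And>x. q x = (\<Sum>k\<in>K. c k * (\<Prod>b\<in>Basis. (x \<bullet> b) ^ k b))"
    using assms unfolding poly_fun_def by blast
  have "continuous_on UNIV q"
    unfolding q by (intro continuous_intros)
  then show ?thesis by (rule borel_measurable_continuous_onI)
qed

lemma integrable_mult_if_square_integrable:
  fixes g h :: "'a \<Rightarrow> real"
  assumes "g \<in> borel_measurable M" "h \<in> borel_measurable M"
    and "integrable M (\<lambda>x. (g x)\<^sup>2)" "integrable M (\<lambda>x. (h x)\<^sup>2)"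
  shows "integrable M (\<lambda>x. g x * h x)"
proof (rule Bochner_Integration.integrable_bound)
  show "integrable M (\<lambda>x. (g x)\<^sup>2 + (h x)\<^sup>2)" using assms(3,4) by simp
  show "(\<lambda>x. g x * h x) \<in> borel_measurable M" using assms(1,2) by simp
  have "\<bar>a * b\<bar> \<le> a\<^sup>2 + b\<^sup>2" for a b :: real
  proof -
    have "2 * \<bar>a * b\<bar> \<le> a\<^sup>2 + b\<^sup>2"
      using sum_squares_bound[of "\<bar>a\<bar>" "\<bar>b\<bar>"] by (simp add: abs_mult)
    then show ?thesis using abs_ge_zero[of "a * b"] by linarith
  qed
  then show "AE x in M. norm (g x * h x) \<le> norm ((g x)\<^sup>2 + (h x)\<^sup>2)"
    by simp
qed

context
  fixes M :: "'a measure" and \<phi> :: "nat \<Rightarrow> 'a \<Rightarrow> real" and N :: nat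
  assumes \<phi>_meas: "\<And>j. j \<le> N \<Longrightarrow> \<phi> j \<in> borel_measurable M"
    and \<phi>_sq: "\<And>j. j \<le> N \<Longrightarrow> integrable M (\<lambda>x. (\<phi> j x)\<^sup>2)"
    and \<phi>_orth: "\<And>i j. i \<le> N \<Longrightarrow> j \<le> N \<Longrightarrow> i \<noteq> j \<Longrightarrow> (\<integral>x. \<phi> i x * \<phi> j x \<partial>M) = 0"
begin

lemma integrable_orthogonal_mult:
  "i \<le> N \<Longrightarrow> j \<le> N \<Longrightarrow> integrable M (\<lambda>x. \<phi> i x * \<phi> j x)"
  by (intro integrable_mult_if_square_integrable \<phi>_meas \<phi>_sq)

lemma integral_orthogonal_expansion_mult:
  "(\<integral>x. (\<Sum>j\<le>N. a j * \<phi> j x) * (\<Sum>j\<le>N. b j * \<phi> j x) \<partial>M) =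
    (\<Sum>j\<le>N. a j * b j * (\<integral>x. (\<phi> j x)\<^sup>2 \<partial>M))"
proof -
  have "(\<integral>x. (\<Sum>j\<le>N. a j * \<phi> j x) * (\<Sum>j\<le>N. b j * \<phi> j x) \<partial>M) =
      (\<integral>x. (\<Sum>k\<le>N. \<Sum>l\<le>N. a k * b l * (\<phi> k x * \<phi> l x)) \<partial>M)"
    by (simp add: sum_product ac_simps)
  also have "\<dots> = (\<Sum>k\<le>N. (\<integral>x. (\<Sum>l\<le>N. a k * b l * (\<phi> k x * \<phi> l x)) \<partial>M))"
    by (intro Bochner_Integration.integral_sum Bochner_Integration.integrable_sum
        integrable_mult_right integrable_orthogonal_mult) auto
  also have "\<dots> = (\<Sum>k\<le>N. \<Sum>l\<le>N. (\<integral>x. a k * b l * (\<phi> k x * \<phi> l x) \<partial>M))"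
    by (intro sum.cong refl Bochner_Integration.integral_sum integrable_mult_right
        integrable_orthogonal_mult) auto
  also have "\<dots> = (\<Sum>k\<le>N. \<Sum>l\<le>N. a k * b l * (\<integral>x. \<phi> k x * \<phi> l x \<partial>M))"
    by simp
  also have "\<dots> = (\<Sum>k\<le>N. a k * b k * (\<integral>x. (\<phi> k x)\<^sup>2 \<partial>M))"
  proof (intro sum.cong refl)
    fix k assume "k \<in> {..N}"
    then have "(\<Sum>l\<le>N. a k * b l * (\<integral>x. \<phi> k x * \<phi> l x \<partial>M)) =
        (\<Sum>l\<le>N. if l = k then a k * b k * (\<integral>x. (\<phi> k x)\<^sup>2 \<partial>M) else 0)"
      by (intro sum.cong) (auto simp: \<phi>_orth power2_eq_square)
    with \<open>k \<in> {..N}\<close> show "(\<Sum>l\<le>N. a k * b l * (\<integral>x. \<phi> k x * \<phi> l x \<partial>M)) =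
        a k * b k * (\<integral>x. (\<phi> k x)\<^sup>2 \<partial>M)" by simp
  qed
  finally show ?thesis .
qed

lemma integral_orthogonal_expansion:
  assumes "prob_space M" and \<phi>0: "\<And>x. \<phi> 0 x = 1"
  shows "(\<integral>x. (\<Sum>j\<le>N. a j * \<phi> j x) \<partial>M) = a 0"
proof -
  have "(\<integral>x. \<phi> j x \<partial>M) = (if j = 0 then 1 else 0)" if "j \<le> N" for j
    using \<phi>_orth[OF that, of 0] prob_space.prob_space[OF assms(1)] by (simp add: \<phi>0)
  moreover have "integrable M (\<phi> j)" if "j \<le> N" for j
    using integrable_orthogonal_mult[OF that, of 0] by (simp add: \<phi>0)
  ultimately show ?thesis
    by (simp add: Bochner_Integration.integral_sum if_distrib[of "\<lambda>y. _ * y"] cong: if_cong)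
qed

end

lemma
  fixes \<phi> :: "nat \<Rightarrow> 'a::euclidean_space \<Rightarrow> real"
  assumes prob: "prob_space (dens_measure D p)"
    and poly: "\<And>j. j \<le> N \<Longrightarrow> poly_fun (\<phi> j)"
    and sq: "\<And>j. j \<le> N \<Longrightarrow> integrable (dens_measure D p) (\<lambda>x. (\<phi> j x)\<^sup>2)"
    and orth: "\<And>i j. i \<le> N \<Longrightarrow> j \<le> N \<Longrightarrow> i \<noteq> j \<Longrightarrow> Expect D p (\<lambda>x. \<phi> i x * \<phi> j x) = 0"
    and \<phi>0: "\<And>x. \<phi> 0 x = 1"
  shows Expect_orthogonal_expansion: "Expect D p (\<lambda>x. \<Sum>j\<le>N. a j * \<phi> j x) = a 0"
    and Expect_orthogonal_expansion_mult:
      "Expect D p (\<lambda>x. (\<Sum>j\<le>N. a j * \<phi> j x) * (\<Sum>j\<le>N. b j * \<phi> j x)) =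
        (\<Sum>j\<le>N. a j * b j * Expect D p (\<lambda>x. (\<phi> j x)\<^sup>2))"
proof -
  have "sets (dens_measure D p) = sets borel" unfolding dens_measure_def by simp
  then have "\<phi> j \<in> borel_measurable (dens_measure D p)" if "j \<le> N" for j
    using poly_fun_borel_measurable[OF poly[OF that]] measurable_cong_sets by blast
  note orthogonal = this sq orth[unfolded Expect_def]
  show "Expect D p (\<lambda>x. \<Sum>j\<le>N. a j * \<phi> j x) = a 0"
    unfolding Expect_def using integral_orthogonal_expansion[where \<phi> = \<phi> and N = N,
      OF orthogonal prob \<phi>0] .
  show "Expect D p (\<lambda>x. (\<Sum>j\<le>N. a j * \<phi> j x) * (\<Sum>j\<le>N. b j * \<phi> j x)) =
      (\<Sum>j\<le>N. a j * b j * Expect D p (\<lambda>x. (\<phi> j x)\<^sup>2))"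
    unfolding Expect_def by (rule integral_orthogonal_expansion_mult[where \<phi> = \<phi> and N = N, OF orthogonal])
qed

theorem theorem1:
  fixes D :: "'a::euclidean_space set" and p :: "'a \<Rightarrow> real"
    and f :: "nat \<Rightarrow> 'a \<Rightarrow> real" and \<phi> :: "nat \<Rightarrow> 'a \<Rightarrow> real"
    and n N :: nat and L :: "real mat"
  defines "E \<equiv> Expect D p"
  defines "Ef \<equiv> vec n (\<lambda>i. E (f i))"
  defines "Eff \<equiv> mat n n (\<lambda>(i,j). E (\<lambda>x. f i x * f j x))"
  defines "W \<equiv> mat (N+1) (N+1) (\<lambda>(i,j). if i = j then E (\<lambda>x. (\<phi> i x)\<^sup>2) else 0)"
  defines "W1_inv_sqrt \<equiv> mat N N (\<lambda>(i,j). if i = j then 1 / sqrt (E (\<lambda>x. (\<phi> (Suc i) x)\<^sup>2)) else 0)"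
  defines "fhat \<equiv> (\<lambda>(F::real mat) i x. \<Sum>j\<le>N. F $$ (i,j) * \<phi> j x)"
  defines "Fof \<equiv> (\<lambda>U::real mat. mat n (N+1)
             (\<lambda>(i,j). if j = 0 then Ef $ i else (L * U * W1_inv_sqrt) $$ (i, j - 1)))"
  assumes D_meas: "D \<in> sets lborel"
    and p_meas: "p \<in> borel_measurable lborel" and p_nonneg: "\<And>x. x \<in> D \<Longrightarrow> p x \<ge> 0"
    and prob: "prob_space (dens_measure D p)"
    and f_meas: "\<And>i. i < n \<Longrightarrow> f i \<in> borel_measurable lborel"
    and f_sq: "\<And>i. i < n \<Longrightarrow> integrable (dens_measure D p) (\<lambda>x. (f i x)\<^sup>2)"
    and phi_poly: "\<And>i. i \<le> N \<Longrightarrow> poly_fun (\<phi> i)"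
    and phi0: "\<And>x. \<phi> 0 x = 1"
    and phi_sq: "\<And>i. i \<le> N \<Longrightarrow> integrable (dens_measure D p) (\<lambda>x. (\<phi> i x)\<^sup>2)"
    and orth: "\<And>i j. i \<le> N \<Longrightarrow> j \<le> N \<Longrightarrow> i \<noteq> j \<Longrightarrow> E (\<lambda>x. \<phi> i x * \<phi> j x) = 0"
    and pos: "\<And>i. i \<le> N \<Longrightarrow> E (\<lambda>x. (\<phi> i x)\<^sup>2) > 0"
    and L: "L \<in> carrier_mat n n" "L * L\<^sup>T = Eff - mat n n (\<lambda>(i,j). Ef $ i * Ef $ j)"
    and Nn: "N \<ge> n"
  shows "(\<forall>U \<in> carrier_mat n N. U * U\<^sup>T = 1\<^sub>m n \<longrightarrow>
            (let F = Fof U in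
              (\<forall>i<n. E (fhat F i) = E (f i)) \<and>
              mat n n (\<lambda>(i,j). E (\<lambda>x. fhat F i x * fhat F j x)) = F * W * F\<^sup>T \<and>
              F * W * F\<^sup>T = Eff))
       \<and> (\<forall>F \<in> carrier_mat n (N+1).
            (\<forall>i<n. E (fhat F i) = E (f i)) \<and>
            mat n n (\<lambda>(i,j). E (\<lambda>x. fhat F i x * fhat F j x)) = Eff
            \<longrightarrow> (\<exists>U \<in> carrier_mat n N. U * U\<^sup>T = 1\<^sub>m n \<and> F = Fof U))"
proof -
  define w where "w k = E (\<lambda>x. (\<phi> k x)\<^sup>2)" for k
  note expansion =
    Expect_orthogonal_expansion[where \<phi> = \<phi> and N = N, OF prob phi_poly phi_sq orth[unfolded E_def] phi0]
    Expect_orthogonal_expansion_mult[where \<phi> = \<phi> and N = N, OF prob phi_poly phi_sq orth[unfolded E_def] phi0]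
  have mean: "E (fhat F i) = F $$ (i, 0)" for F i
    unfolding E_def fhat_def by (rule expansion(1))
  have W: "W = mat_diag (N + 1) w"
    unfolding W_def mat_diag_def w_def by (auto intro!: cong_mat)
  have second_moments: "mat n n (\<lambda>(i, j). E (\<lambda>x. fhat F i x * fhat F j x)) = F * W * F\<^sup>T"
    if "F \<in> carrier_mat n (N + 1)" for F
    unfolding W quadratic_form_mat_diag[OF that]
    by (auto simp: E_def fhat_def w_def expansion(2) lessThan_Suc_atMost intro!: cong_mat)
  have w0: "w 0 = 1"
    using prob_space.prob_space[OF prob] by (simp add: w_def E_def Expect_def phi0)
  have w_pos: "\<forall>c<N. w (Suc c) > 0" using pos by (simp add: w_def)
  have W1: "W1_inv_sqrt = mat_diag N (\<lambda>c. 1 / sqrt (w (Suc c)))"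
    unfolding W1_inv_sqrt_def mat_diag_def w_def by (auto intro!: cong_mat)
  have Fof: "Fof = pc_coeff_mat n N w Ef L"
    unfolding Fof_def pc_coeff_mat_def W1 ..
  have Eff: "Eff = L * L\<^sup>T + mat n n (\<lambda>(i, j). Ef $ i * Ef $ j)"
    using L by (auto simp: Eff_def)
  have Ef: "E (f i) = Ef $ i" if "i < n" for i using that by (simp add: Ef_def)
  \<comment> \<open>\<open>f\<close> enters only through \<open>Ef\<close>, \<open>Eff\<close> and \<open>L\<close>.\<close>
  note moments_iff = pc_coeff_mat_moments_iff[where m = Ef, OF _ L(1) Nn w0 w_pos, folded W Eff Fof]
  show ?thesis
  proof (intro conjI ballI impI)
    fix U :: "real mat" assume "U \<in> carrier_mat n N" "U * U\<^sup>T = 1\<^sub>m n"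
    moreover have F: "Fof U \<in> carrier_mat n (N + 1)" by (simp add: Fof_def)
    ultimately have "(\<forall>i<n. Fof U $$ (i, 0) = Ef $ i) \<and> Fof U * W * (Fof U)\<^sup>T = Eff"
      using moments_iff[OF F] by blast
    then show "let F = Fof U in
        (\<forall>i<n. E (fhat F i) = E (f i)) \<and>
        mat n n (\<lambda>(i, j). E (\<lambda>x. fhat F i x * fhat F j x)) = F * W * F\<^sup>T \<and> F * W * F\<^sup>T = Eff"
      using mean second_moments[OF F] Ef by (simp add: Let_def)
  next
    fix F :: "real mat" assume F: "F \<in> carrier_mat n (N + 1)"
      and "(\<forall>i<n. E (fhat F i) = E (f i)) \<and> mat n n (\<lambda>(i, j). E (\<lambda>x. fhat F i x * fhat F j x)) = Eff"
    then show "\<exists>U\<in>carrier_mat n N. U * U\<^sup>T = 1\<^sub>m n \<and> F = Fof U"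
      using moments_iff[OF F] mean second_moments[OF F] Ef by simp
  qed
qed

end
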